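(* Let $(\Omega,\Sigma,\mu)$ be a measure space with the direct sum property and $L^0=L^0(\Omega,\Sigma,\mu)$. For every nonzero derivation $\delta:L^0\to L^0$ there exist a sequence $(\lambda_n)_{n=1}^\infty$ in $L^0$ with $|\lambda_n|\le\mathbf 1$ for all $n\in\mathbb N$, and a nonzero idempotent $\pi\in\nabla$, such that $$|\delta(\lambda_n)|\ge n\pi\quad\text{for all } n\in\mathbb N.$$
   Context: $L^0(\Omega,\Sigma,\mu)$ is the algebra of equivalence classes (a.e. equality) of complex measurable functions, with unit $\mathbf 1$ and the usual a.e. order on real-valued elements; $\mu$ has the direct sum property: there is a family $\{\Omega_i\}_{i\in J}\subset\Sigma$, $0<\mu(\Omega_i)<\infty$, such that each $A\in\Sigma$ of finite measure equals $\bigcup_{i\in J_0}(A\cap\Omega_i)\cup B$ with $J_0$ countable and $B$ null. A derivation is a linear map $\delta$ with $\delta(xy)=\delta(x)y+x\delta(y)$. $\nabla=\{\tilde\chi_A:A\in\Sigma\}$ is the set of idempotents of $L^0$ (classes of characteristic functions of measurable sets). *)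

theory Defs
  imports "HOL-Probability.Probability"
begin

text \<open>Elements of L0(M) are represented by complex-valued measurable functions;
  equality in L0 is equality almost everywhere.\<close>

definition L0 :: "'a measure \<Rightarrow> ('a \<Rightarrow> complex) set" where
  "L0 M = borel_measurable M"

definition ae_eq :: "'a measure \<Rightarrow> ('a \<Rightarrow> complex) \<Rightarrow> ('a \<Rightarrow> complex) \<Rightarrow> bool" where
  "ae_eq M f g \<longleftrightarrow> (AE x in M. f x = g x)"

definition direct_sum_property :: "'a measure \<Rightarrow> bool" where
  "direct_sum_property M \<longleftrightarrow>
    (\<exists>(J::'a set set). J \<subseteq> sets M \<and>
       (\<forall>W\<in>J. 0 < emeasure M W \<and> emeasure M W < \<infinity>) \<and>
       (\<forall>A\<in>sets M. emeasure M A < \<infinity> \<longrightarrow>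
          (\<exists>J0 B. J0 \<subseteq> J \<and> countable J0 \<and> B \<in> null_sets M \<and>
                 A = (\<Union>W\<in>J0. A \<inter> W) \<union> B)))"

text \<open>A derivation of L0(M), given on representatives: it maps L0 to L0,
  respects a.e. equality (so is well defined on classes), is complex-linear
  and satisfies the Leibniz rule, all modulo a.e. equality.\<close>
definition L0_derivation :: "'a measure \<Rightarrow> (('a \<Rightarrow> complex) \<Rightarrow> ('a \<Rightarrow> complex)) \<Rightarrow> bool" where
  "L0_derivation M \<delta> \<longleftrightarrow>
    (\<forall>f\<in>L0 M. \<delta> f \<in> L0 M) \<and>
    (\<forall>f\<in>L0 M. \<forall>g\<in>L0 M. ae_eq M f g \<longrightarrow> ae_eq M (\<delta> f) (\<delta> g)) \<and>
    (\<forall>f\<in>L0 M. \<forall>g\<in>L0 M. ae_eq M (\<delta> (\<lambda>x. f x + g x)) (\<lambda>x. \<delta> f x + \<delta> g x)) \<and>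
    (\<forall>c. \<forall>f\<in>L0 M. ae_eq M (\<delta> (\<lambda>x. c * f x)) (\<lambda>x. c * \<delta> f x)) \<and>
    (\<forall>f\<in>L0 M. \<forall>g\<in>L0 M. ae_eq M (\<delta> (\<lambda>x. f x * g x)) (\<lambda>x. \<delta> f x * g x + f x * \<delta> g x))"

definition nonzero_on_L0 :: "'a measure \<Rightarrow> (('a \<Rightarrow> complex) \<Rightarrow> ('a \<Rightarrow> complex)) \<Rightarrow> bool" where
  "nonzero_on_L0 M \<delta> \<longleftrightarrow> (\<exists>f\<in>L0 M. \<not> ae_eq M (\<delta> f) (\<lambda>x. 0))"

end

theory Submission
  imports Defs
begin

text \<open>A derivation of \<open>L\<^sup>0\<close> vanishes on idempotents and hence, by the Leibniz rule
  on level sets, on every countably valued function. Rounding \<open>r f\<close> to a grid of mesh \<open>1/2\<close>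
  therefore yields \<open>\<lambda>\<close> with \<open>|\<lambda>| \<le> 1\<close> and \<open>\<delta>(\<lambda>) = r \<delta>(f)\<close>. If \<open>\<delta>(f) \<noteq> 0\<close>, then
  \<open>|\<delta>(f)| \<ge> c\<close> on a non-null set \<open>A\<close>, and \<open>r = n/c\<close> gives \<open>|\<delta>(\<lambda>\<^sub>n)| \<ge> n\<close> on \<open>A\<close>.\<close>

lemma
  assumes "L0_derivation M \<delta>"
  shows L0_derivation_closed: "f \<in> L0 M \<Longrightarrow> \<delta> f \<in> L0 M"
    and L0_derivation_add: "f \<in> L0 M \<Longrightarrow> g \<in> L0 M \<Longrightarrow>
      AE x in M. \<delta> (\<lambda>x. f x + g x) x = \<delta> f x + \<delta> g x"
    and L0_derivation_cmult: "f \<in> L0 M \<Longrightarrow> AE x in M. \<delta> (\<lambda>x. c * f x) x = c * \<delta> f x"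
    and L0_derivation_mult: "f \<in> L0 M \<Longrightarrow> g \<in> L0 M \<Longrightarrow>
      AE x in M. \<delta> (\<lambda>x. f x * g x) x = \<delta> f x * g x + f x * \<delta> g x"
  using assms unfolding L0_derivation_def ae_eq_def by blast+

lemma L0_derivation_diff:
  assumes \<delta>: "L0_derivation M \<delta>" and f: "f \<in> L0 M" and g: "g \<in> L0 M"
  shows "AE x in M. \<delta> (\<lambda>x. f x - g x) x = \<delta> f x - \<delta> g x"
proof -
  have mg: "(\<lambda>x. (-1) * g x) \<in> L0 M" using g unfolding L0_def by measurable
  have "AE x in M. \<delta> (\<lambda>x. f x + (-1) * g x) x = \<delta> f x - \<delta> g x"
    using L0_derivation_add[OF \<delta> f mg] L0_derivation_cmult[OF \<delta> g, of "-1"]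
    by eventually_elim simp
  then show ?thesis by simp
qed

text \<open>\<open>\<delta>(e) = \<delta>(e\<^sup>2) = 2 e \<delta>(e)\<close> forces \<open>\<delta>(e) = 0\<close> both where \<open>e = 0\<close> and where \<open>e = 1\<close>.\<close>
lemma L0_derivation_indicator:
  assumes \<delta>: "L0_derivation M \<delta>" and S: "S \<in> sets M"
  shows "AE x in M. \<delta> (indicator S) x = 0"
proof -
  let ?e = "indicator S :: 'a \<Rightarrow> complex"
  have e: "?e \<in> L0 M" unfolding L0_def using S by simp
  have "(\<lambda>x. ?e x * ?e x) = ?e" by (auto simp: indicator_def)
  then have "AE x in M. \<delta> ?e x = \<delta> ?e x * ?e x + ?e x * \<delta> ?e x"
    using L0_derivation_mult[OF \<delta> e e] by simp
  then show ?thesis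
  proof eventually_elim
    case (elim x)
    then show ?case by (cases "x \<in> S") simp_all
  qed
qed

text \<open>On a level set \<open>S = {g = c}\<close> the Leibniz rule gives
  \<open>1\<^sub>S \<delta>(g) = \<delta>(1\<^sub>S g) - g \<delta>(1\<^sub>S) = c \<delta>(1\<^sub>S) - g \<delta>(1\<^sub>S) = 0\<close>;
  countably many level sets cover the space.\<close>
lemma L0_derivation_countably_valued:
  assumes \<delta>: "L0_derivation M \<delta>" and g: "g \<in> L0 M" and D: "countable D"
    and gD: "\<And>x. x \<in> space M \<Longrightarrow> g x \<in> D"
  shows "AE x in M. \<delta> g x = 0"
proof -
  let ?S = "\<lambda>c. g -` {c} \<inter> space M"
  have level_set: "AE x in M. indicator (?S c) x * \<delta> g x = 0" for c
  proof -
    have S: "?S c \<in> sets M" using g unfolding L0_def by measurable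
    let ?e = "indicator (?S c) :: 'a \<Rightarrow> complex"
    have e: "?e \<in> L0 M" unfolding L0_def using S by simp
    have "(\<lambda>x. ?e x * g x) = (\<lambda>x. c * ?e x)" by (auto simp: indicator_def)
    then have "AE x in M. c * \<delta> ?e x = \<delta> ?e x * g x + ?e x * \<delta> g x"
      using L0_derivation_mult[OF \<delta> e g] L0_derivation_cmult[OF \<delta> e, of c]
      by (auto elim: eventually_rev_mp)
    with L0_derivation_indicator[OF \<delta> S] show ?thesis
      by eventually_elim simp
  qed
  have "AE x in M. \<forall>c\<in>D. indicator (?S c) x * \<delta> g x = 0"
    using D level_set by (rule AE_ball_countable'[rotated])
  with AE_space show ?thesis
  proof eventually_elim
    case (elim x)
    then have "indicator (?S (g x)) x * \<delta> g x = 0" using gD by blast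
    with elim show ?case by simp
  qed
qed

definition grid_round :: "real \<Rightarrow> complex \<Rightarrow> complex" where
  "grid_round e z = of_real e * (of_int \<lfloor>Re z / e\<rfloor> + \<i> * of_int \<lfloor>Im z / e\<rfloor>)"

definition grid :: "real \<Rightarrow> complex set" where
  "grid e = (\<lambda>(a, b). of_real e * (of_int a + \<i> * of_int b)) ` (UNIV :: (int \<times> int) set)"

lemma countable_grid: "countable (grid e)"
  unfolding grid_def by simp

lemma grid_round_in_grid: "grid_round e z \<in> grid e"
  unfolding grid_round_def grid_def by (rule image_eqI[of _ _ "(\<lfloor>Re z / e\<rfloor>, \<lfloor>Im z / e\<rfloor>)"]) simp_all

lemma abs_sub_mult_floor_divide_le:
  fixes e t :: real
  assumes "e > 0"
  shows "\<bar>t - e * of_int \<lfloor>t / e\<rfloor>\<bar> \<le> e"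
proof -
  have "of_int \<lfloor>t / e\<rfloor> \<le> t / e" "t / e < of_int \<lfloor>t / e\<rfloor> + 1" by linarith+
  then have "of_int \<lfloor>t / e\<rfloor> * e \<le> t" "t < (of_int \<lfloor>t / e\<rfloor> + 1) * e"
    using pos_le_divide_eq[OF assms] pos_divide_less_eq[OF assms] by blast+
  then show ?thesis by (simp add: algebra_simps)
qed

lemma norm_sub_grid_round_le:
  assumes "e > 0"
  shows "cmod (z - grid_round e z) \<le> 2 * e"
proof -
  let ?w = "z - grid_round e z"
  have "cmod ?w \<le> \<bar>Re ?w\<bar> + \<bar>Im ?w\<bar>" by (rule cmod_le)
  also have "\<dots> \<le> e + e"
    using abs_sub_mult_floor_divide_le[OF assms, of "Re z"]
      abs_sub_mult_floor_divide_le[OF assms, of "Im z"]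
    by (simp add: grid_round_def)
  finally show ?thesis by simp
qed

text \<open>Subtracting from \<open>r f\<close> the rounding of \<open>r f\<close> to a grid of mesh \<open>1/2\<close> leaves
  a function bounded by \<open>1\<close>, while \<open>\<delta>\<close> does not see the countably valued rounding.\<close>
lemma L0_derivation_rescale_bounded:
  assumes \<delta>: "L0_derivation M \<delta>" and f: "f \<in> L0 M"
  obtains l where "l \<in> L0 M" "\<And>x. cmod (l x) \<le> 1"
    "AE x in M. \<delta> l x = r * \<delta> f x"
proof -
  define h where "h x = r * f x" for x
  define g where "g x = grid_round (1/2) (h x)" for x
  have h: "h \<in> L0 M" using f unfolding L0_def h_def by measurable
  have g: "g \<in> L0 M" using h unfolding L0_def g_def grid_round_def by measurable
  have "(\<lambda>x. h x - g x) \<in> L0 M" using h g unfolding L0_def by measurable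
  moreover have "cmod (h x - g x) \<le> 1" for x
    using norm_sub_grid_round_le[of "1/2" "h x"] by (simp add: g_def)
  moreover have "AE x in M. \<delta> (\<lambda>x. h x - g x) x = r * \<delta> f x"
  proof -
    have "AE x in M. \<delta> g x = 0"
      by (rule L0_derivation_countably_valued[OF \<delta> g countable_grid[of "1/2"]])
        (simp add: g_def grid_round_in_grid)
    with L0_derivation_diff[OF \<delta> h g] L0_derivation_cmult[OF \<delta> f, of r]
    show ?thesis unfolding h_def by eventually_elim simp
  qed
  ultimately show thesis by (rule that)
qed

lemma not_AE_zero_imp_level_set_not_null:
  fixes u :: "'a \<Rightarrow> complex"
  assumes u: "u \<in> borel_measurable M" and nz: "\<not> (AE x in M. u x = 0)"
  obtains c where "c > 0" "{x \<in> space M. c \<le> cmod (u x)} \<notin> null_sets M"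
proof -
  let ?B = "\<lambda>k::nat. {x \<in> space M. 1 / real (Suc k) \<le> cmod (u x)}"
  have "\<exists>k. ?B k \<notin> null_sets M"
  proof (rule ccontr)
    assume "\<nexists>k. ?B k \<notin> null_sets M"
    then have "\<forall>k. AE x in M. x \<notin> ?B k" using AE_not_in by blast
    then have "AE x in M. \<forall>k. x \<notin> ?B k" by (simp add: AE_all_countable)
    then have "AE x in M. u x = 0" using AE_space
    proof eventually_elim
      case (elim x)
      show ?case
      proof (rule ccontr)
        assume "u x \<noteq> 0"
        then obtain k where "inverse (real (Suc k)) < cmod (u x)"
          using reals_Archimedean[of "cmod (u x)"] by auto
        then have "1 / real (Suc k) \<le> cmod (u x)" by (simp add: inverse_eq_divide)
        with elim show False by blast
      qed
    qed
    with nz show False by contradiction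
  qed
  then obtain k where "?B k \<notin> null_sets M" ..
  then show thesis by (rule that[rotated]) simp
qed

theorem lemma3p3:
  fixes M :: "'a measure" and \<delta> :: "('a \<Rightarrow> complex) \<Rightarrow> ('a \<Rightarrow> complex)"
  assumes "direct_sum_property M"
    and "L0_derivation M \<delta>"
    and "nonzero_on_L0 M \<delta>"
  shows "\<exists>(lam :: nat \<Rightarrow> 'a \<Rightarrow> complex) A.
           (\<forall>n. lam n \<in> L0 M \<and> (AE x in M. cmod (lam n x) \<le> 1)) \<and>
           A \<in> sets M \<and> A \<notin> null_sets M \<and>
           (\<forall>n\<ge>1. AE x in M. real n * indicator A x \<le> cmod (\<delta> (lam n) x))"
proof -
  note \<delta> = assms(2)
  obtain f where f: "f \<in> L0 M" and nz: "\<not> (AE x in M. \<delta> f x = 0)"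
    using assms(3) unfolding nonzero_on_L0_def ae_eq_def by blast
  have \<delta>f: "\<delta> f \<in> borel_measurable M" using L0_derivation_closed[OF \<delta> f] by (simp add: L0_def)
  then obtain c where c: "c > 0" and A: "{x \<in> space M. c \<le> cmod (\<delta> f x)} \<notin> null_sets M"
    (is "?A \<notin> _") using not_AE_zero_imp_level_set_not_null nz by blast
  have "\<exists>l. l \<in> L0 M \<and> (\<forall>x. cmod (l x) \<le> 1) \<and>
      (AE x in M. \<delta> l x = of_real (real n / c) * \<delta> f x)" for n :: nat
    by (rule L0_derivation_rescale_bounded[OF \<delta> f]) blast
  then obtain lam where lam: "\<And>n. lam n \<in> L0 M" "\<And>n x. cmod (lam n x) \<le> 1"
    and \<delta>lam: "\<And>n. AE x in M. \<delta> (lam n) x = of_real (real n / c) * \<delta> f x"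
    by metis
  have "AE x in M. real n * indicator ?A x \<le> cmod (\<delta> (lam n) x)" for n
    using \<delta>lam[of n]
  proof eventually_elim
    case (elim x)
    have "real n * indicator ?A x = real n / c * (c * indicator ?A x)"
      using c by simp
    also have "\<dots> \<le> real n / c * cmod (\<delta> f x)"
      using c by (intro mult_left_mono) (auto simp: indicator_def)
    also have "\<dots> = cmod (\<delta> (lam n) x)"
      using c by (simp add: elim norm_mult norm_divide)
    finally show ?case .
  qed
  moreover have "?A \<in> sets M" using \<delta>f by measurable
  ultimately show ?thesis using lam A by blast
qed

end
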